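(* Let $\mathbf{S}$ ($n\times n$), $\hat{\mathbf{U}}$ ($m\times n$), $\mathbf{V}$ ($n\times m$) be constant complex matrices and $\hat{\mathbf{K}}$ an $n\times n$ matrix with $\mathbf{S}\hat{\mathbf{K}}+\hat{\mathbf{K}}\mathbf{S}=\mathbf{V}\hat{\mathbf{U}}$. Let $\hat{\mathbf{\Xi}}=e^{-2(x\mathbf{S}+t\mathbf{S}^3)}$, $x,t\in\mathbb{R}$. Then, wherever $\mathbf{I}-\hat{\mathbf{K}}\hat{\mathbf{\Xi}}$ is invertible, $u=\phi_x$ with $\phi=\hat{\mathbf{U}}\hat{\mathbf{\Xi}}(\mathbf{I}-\hat{\mathbf{K}}\hat{\mathbf{\Xi}})^{-1}\mathbf{V}$ solves the $m\times m$ matrix KdV equation $u_t-\tfrac14u_{xxx}-\tfrac32(u^2)_x=0$.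
   Context: $\mathbf{I}=I_n$; subscripts $x,t$ denote partial derivatives. *)

theory Defs
  imports "HOL-Analysis.Analysis"
begin

primrec mpow :: "complex^'n^'n \<Rightarrow> nat \<Rightarrow> complex^'n^'n" where
  "mpow A 0 = mat 1"
| "mpow A (Suc k) = A ** mpow A k"

definition mexp :: "complex^'n^'n \<Rightarrow> complex^'n^'n" where
  "mexp A = (\<Sum>k. (inverse (fact k :: real)) *\<^sub>R mpow A k)"

definition pdx :: "(real \<Rightarrow> real \<Rightarrow> 'a::real_normed_vector) \<Rightarrow> real \<Rightarrow> real \<Rightarrow> 'a" where
  "pdx f x t = vector_derivative (\<lambda>y. f y t) (at x)"

definition pdt :: "(real \<Rightarrow> real \<Rightarrow> 'a::real_normed_vector) \<Rightarrow> real \<Rightarrow> real \<Rightarrow> 'a" where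
  "pdt f x t = vector_derivative (\<lambda>s. f x s) (at t)"

end

theory Submission
  imports Defs
begin

(* The potential phi = U Xi (I - K Xi)^-1 V is the image, under the linear map
   w |-> U w V, of the resolvent P = Xi (I - K Xi)^-1 in the algebra of n x n
   matrices.  Since Xi^-1 = exp (2 (x S + t S^3)), P is the inverse of G = Xi^-1 - K,
   and G_x = Xi^-1 2S, G_t = Xi^-1 2S^3 with Xi^-1 commuting with S.  Differentiating
   P = G^-1 and using the Sylvester relation S K + K S = V U =: D gives the Riccati
   equations
     P_x = -(S P + P S) - P D P,    P_t = -(S^3 P + P S^3) - P (S^3 K + K S^3) P,
   and the relation P S^2 = S^2 P - P S D P + P D S P.  As U a V U b V = U (a D b) V,
   every term of the KdV equation for u = phi_x is the image of a polynomial in S, D, P,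
   and the equation reduces to a ring identity that follows from that relation. *)

section \<open>Square complex matrices as a Banach algebra\<close>

typedef (overloaded) ('n::finite) sq = "UNIV :: (complex^'n^'n) set"
  morphisms Rep_sq Abs_sq by auto

setup_lifting type_definition_sq

lemma bounded_linear_matrix_vector_mult: "bounded_linear ((*v) (A::complex^'n::finite^'n))"
  by simp

lemma matrix_mult_add_rdistrib: "((A::'b::semiring_1^'n::finite^'m) + B) ** C = A ** C + B ** C"
  by (vector matrix_matrix_mult_def sum.distrib[symmetric] field_simps)

lemma scaleR_matrix_vector_mult: "(r *\<^sub>R (A::complex^'n::finite^'n)) *v v = r *\<^sub>R (A *v v)"
  by (vector matrix_vector_mult_def scaleR_sum_right)

instantiation sq :: (finite) real_normed_algebra_1
begin
lift_definition zero_sq :: "'a sq" is 0 .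
lift_definition one_sq :: "'a sq" is "mat 1" .
lift_definition plus_sq :: "'a sq \<Rightarrow> 'a sq \<Rightarrow> 'a sq" is "(+)" .
lift_definition minus_sq :: "'a sq \<Rightarrow> 'a sq \<Rightarrow> 'a sq" is "(-)" .
lift_definition uminus_sq :: "'a sq \<Rightarrow> 'a sq" is "uminus" .
lift_definition times_sq :: "'a sq \<Rightarrow> 'a sq \<Rightarrow> 'a sq" is "(**)" .
lift_definition scaleR_sq :: "real \<Rightarrow> 'a sq \<Rightarrow> 'a sq" is "scaleR" .
lift_definition norm_sq :: "'a sq \<Rightarrow> real" is "\<lambda>A. onorm ((*v) A)" .
definition dist_sq :: "'a sq \<Rightarrow> 'a sq \<Rightarrow> real" where "dist_sq a b = norm (a - b)"
definition sgn_sq :: "'a sq \<Rightarrow> 'a sq" where "sgn_sq x = scaleR (inverse (norm x)) x"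
definition uniformity_sq :: "('a sq \<times> 'a sq) filter" where
  "uniformity_sq = (INF e\<in>{0 <..}. principal {(x, y). dist x y < e})"
definition open_sq :: "'a sq set \<Rightarrow> bool" where
  "open_sq S = (\<forall>x\<in>S. \<forall>\<^sub>F (x', y) in uniformity. x' = x \<longrightarrow> y \<in> S)"

instance
proof
  fix a b c :: "'a sq" and r q :: real
  show "a + b + c = a + (b + c)" by transfer (simp add: add.assoc)
  show "a + b = b + a" by transfer (simp add: add.commute)
  show "0 + a = a" by transfer simp
  show "- a + a = 0" by transfer simp
  show "a - b = a + - b" by transfer simp
  show "r *\<^sub>R (a + b) = r *\<^sub>R a + r *\<^sub>R b" by transfer (simp add: scaleR_add_right)
  show "(r + q) *\<^sub>R a = r *\<^sub>R a + q *\<^sub>R a" by transfer (simp add: scaleR_add_left)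
  show "r *\<^sub>R q *\<^sub>R a = (r * q) *\<^sub>R a" by transfer simp
  show "1 *\<^sub>R a = a" by transfer simp
  show "a * b * c = a * (b * c)" by transfer (simp add: matrix_mul_assoc)
  show "(a + b) * c = a * c + b * c" by transfer (simp add: matrix_mult_add_rdistrib)
  show "a * (b + c) = a * b + a * c" by transfer (simp add: matrix_add_ldistrib)
  show "r *\<^sub>R a * b = r *\<^sub>R (a * b)" by transfer (simp add: scalar_matrix_assoc)
  show "a * r *\<^sub>R b = r *\<^sub>R (a * b)" by transfer (simp add: matrix_scalar_ac scalar_matrix_assoc)
  show "1 * a = a" by transfer simp
  show "a * 1 = a" by transfer simp
  show "(0::'a sq) \<noteq> 1" by transfer (auto simp: mat_def vec_eq_iff)
  show "dist a b = norm (a - b)" by (simp add: dist_sq_def)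
  show "sgn a = inverse (norm a) *\<^sub>R a" by (simp add: sgn_sq_def)
  show "(uniformity :: ('a sq \<times> 'a sq) filter) = (INF e\<in>{0<..}. principal {(x, y). dist x y < e})"
    by (simp add: uniformity_sq_def)
  show "open U = (\<forall>x\<in>U. \<forall>\<^sub>F (x', y) in uniformity. x' = x \<longrightarrow> y \<in> U)" for U :: "'a sq set"
    by (simp add: open_sq_def)
  show "(norm a = 0) = (a = 0)"
    by transfer (metis onorm_eq_0 bounded_linear_matrix_vector_mult matrix_vector_mult_0 matrix_eq)
  show "norm (a + b) \<le> norm a + norm b"
  proof transfer
    fix A B :: "complex^'a^'a"
    have "(*v) (A + B) = (\<lambda>v. A *v v + B *v v)" by (rule ext) (simp add: matrix_vector_mult_add_rdistrib)
    then show "onorm ((*v) (A + B)) \<le> onorm ((*v) A) + onorm ((*v) B)"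
      using onorm_triangle[OF bounded_linear_matrix_vector_mult[of A] bounded_linear_matrix_vector_mult[of B]] by simp
  qed
  show "norm (r *\<^sub>R a) = \<bar>r\<bar> * norm a"
  proof transfer
    fix c :: real and A :: "complex^'a^'a"
    have "(*v) (c *\<^sub>R A) = (\<lambda>v. c *\<^sub>R (A *v v))" by (rule ext) (simp add: scaleR_matrix_vector_mult)
    then show "onorm ((*v) (c *\<^sub>R A)) = \<bar>c\<bar> * onorm ((*v) A)"
      using onorm_scaleR[OF bounded_linear_matrix_vector_mult[of A], of c] by simp
  qed
  show "norm (a * b) \<le> norm a * norm b"
  proof transfer
    fix A B :: "complex^'a^'a"
    have "(*v) (A ** B) = (*v) A o (*v) B" by (rule ext) (simp add: matrix_vector_mul_assoc)
    then show "onorm ((*v) (A ** B)) \<le> onorm ((*v) A) * onorm ((*v) B)"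
      using onorm_compose[OF bounded_linear_matrix_vector_mult[of A] bounded_linear_matrix_vector_mult[of B]] by simp
  qed
  show "norm (1 :: 'a sq) = 1"
  proof transfer
    have "(*v) (mat 1 :: complex^'a^'a) = (\<lambda>v. v)" by (rule ext) simp
    then show "onorm ((*v) (mat 1 :: complex^'a^'a)) = 1" using onorm_id by simp
  qed
qed
end

text \<open>Completeness: the operator norm and the Euclidean norm of the entries are
  equivalent up to the factor \<open>CARD('n)\<^sup>2\<close>, and \<open>complex^'n^'n\<close> is complete.\<close>

lemma norm_sq_eq: "norm a = onorm ((*v) (Rep_sq a))"
  by (simp add: norm_sq.rep_eq)

lemma norm_axis_one: "norm (axis j (1::complex) :: complex^'n::finite) = 1"
proof -
  have entries: "(\<lambda>i. (norm ((axis j (1::complex) :: complex^'n) $ i))\<^sup>2) = (\<lambda>i. if i = j then 1 else 0)"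
    by (auto simp: axis_def)
  show ?thesis unfolding norm_vec_def L2_set_def entries by simp
qed

lemma matrix_vector_mult_axis_nth: "((A::complex^'n::finite^'n) *v axis j (1::complex)) $ i = A $ i $ j"
  unfolding matrix_vector_mult_def axis_def
  by (simp add: if_distrib cong: if_cong)

lemma norm_entry_le_onorm: "norm ((A::complex^'n::finite^'n) $ i $ j) \<le> onorm ((*v) A)"
proof -
  have "norm (A $ i $ j) \<le> norm (A *v axis j 1)"
    using Finite_Cartesian_Product.norm_nth_le[of "A *v axis j (1::complex)" i]
    by (simp add: matrix_vector_mult_axis_nth)
  also have "\<dots> \<le> onorm ((*v) A) * norm (axis j (1::complex))"
    by (rule onorm[OF bounded_linear_matrix_vector_mult])
  finally show ?thesis by (simp add: norm_axis_one)
qed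

lemma norm_vec_le_sum: "norm (x::'a::real_normed_vector^'n::finite) \<le> (\<Sum>i\<in>UNIV. norm (x $ i))"
  unfolding norm_vec_def by (rule L2_set_le_sum) simp

lemma norm_Rep_sq_le: "norm (Rep_sq a) \<le> real (CARD('n)) ^ 2 * norm (a::'n::finite sq)"
proof -
  have "norm (Rep_sq a) \<le> (\<Sum>i\<in>UNIV. norm (Rep_sq a $ i))" by (rule norm_vec_le_sum)
  also have "\<dots> \<le> (\<Sum>i\<in>(UNIV::'n set). \<Sum>j\<in>(UNIV::'n set). norm (Rep_sq a $ i $ j))"
    by (intro sum_mono norm_vec_le_sum)
  also have "\<dots> \<le> (\<Sum>i\<in>(UNIV::'n set). \<Sum>j\<in>(UNIV::'n set). norm a)"
    by (intro sum_mono) (simp add: norm_sq_eq norm_entry_le_onorm)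
  also have "\<dots> = real (CARD('n)) ^ 2 * norm a" by (simp add: power2_eq_square)
  finally show ?thesis .
qed

lemma onorm_le_norm_matrix: "onorm ((*v) (A::complex^'n::finite^'n)) \<le> real (CARD('n)) ^ 2 * norm A"
proof (rule onorm_bound)
  fix v :: "complex^'n"
  have "norm (A *v v) \<le> (\<Sum>i\<in>UNIV. norm ((A *v v) $ i))" by (rule norm_vec_le_sum)
  also have "\<dots> \<le> (\<Sum>i\<in>(UNIV::'n set). \<Sum>j\<in>(UNIV::'n set). norm (A $ i $ j) * norm (v $ j))"
    unfolding matrix_vector_mult_def
    by (intro sum_mono) (auto intro!: order_trans[OF norm_sum] sum_mono simp: norm_mult)
  also have "\<dots> \<le> (\<Sum>i\<in>(UNIV::'n set). \<Sum>j\<in>(UNIV::'n set). norm A * norm v)"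
  proof (intro sum_mono mult_mono)
    fix i j
    show "norm (A $ i $ j) \<le> norm A"
      using Finite_Cartesian_Product.norm_nth_le[of "A $ i" j] Finite_Cartesian_Product.norm_nth_le[of A i]
      by linarith
    show "norm (v $ j) \<le> norm v" by (rule Finite_Cartesian_Product.norm_nth_le)
  qed auto
  also have "\<dots> = real (CARD('n)) ^ 2 * norm A * norm v" by (simp add: power2_eq_square)
  finally show "norm (A *v v) \<le> real (CARD('n)) ^ 2 * norm A * norm v" .
qed simp

instance sq :: (finite) banach
proof
  fix X :: "nat \<Rightarrow> 'a sq"
  assume "Cauchy X"
  define C where "C = real (CARD('a)) ^ 2"
  have C: "C > 0" by (simp add: C_def)
  have "Cauchy (\<lambda>n. Rep_sq (X n))"
  proof (rule metric_CauchyI)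
    fix e :: real assume "e > 0"
    then obtain M where M: "\<forall>m\<ge>M. \<forall>n\<ge>M. dist (X m) (X n) < e / C"
      using \<open>Cauchy X\<close> C by (metis Cauchy_def divide_pos_pos)
    show "\<exists>M. \<forall>m\<ge>M. \<forall>n\<ge>M. dist (Rep_sq (X m)) (Rep_sq (X n)) < e"
    proof (intro exI allI impI)
      fix m n assume "m \<ge> M" "n \<ge> M"
      have "dist (Rep_sq (X m)) (Rep_sq (X n)) = norm (Rep_sq (X m - X n))"
        by (simp add: dist_norm minus_sq.rep_eq)
      also have "\<dots> \<le> C * norm (X m - X n)" unfolding C_def by (rule norm_Rep_sq_le)
      also have "\<dots> < C * (e / C)" using M \<open>m \<ge> M\<close> \<open>n \<ge> M\<close> C
        by (intro mult_strict_left_mono) (auto simp: dist_norm)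
      finally show "dist (Rep_sq (X m)) (Rep_sq (X n)) < e" using C by simp
    qed
  qed
  then obtain L where L: "(\<lambda>n. Rep_sq (X n)) \<longlonglongrightarrow> L"
    using convergent_eq_Cauchy by blast
  have "X \<longlonglongrightarrow> Abs_sq L"
  proof (rule LIMSEQ_I)
    fix e :: real assume "e > 0"
    then obtain M where M: "\<forall>n\<ge>M. norm (Rep_sq (X n) - L) < e / C"
      using L C by (metis LIMSEQ_D divide_pos_pos)
    show "\<exists>M. \<forall>n\<ge>M. norm (X n - Abs_sq L) < e"
    proof (intro exI allI impI)
      fix n assume "n \<ge> M"
      have "norm (X n - Abs_sq L) = onorm ((*v) (Rep_sq (X n) - L))"
        by (simp add: norm_sq_eq minus_sq.rep_eq Abs_sq_inverse)
      also have "\<dots> \<le> C * norm (Rep_sq (X n) - L)" unfolding C_def by (rule onorm_le_norm_matrix)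
      also have "\<dots> < C * (e / C)" using M \<open>n \<ge> M\<close> C
        by (intro mult_strict_left_mono) auto
      finally show "norm (X n - Abs_sq L) < e" using C by simp
    qed
  qed
  then show "convergent X" by (auto simp: convergent_def)
qed

lemma Rep_sq_add: "Rep_sq (a + b) = Rep_sq a + Rep_sq b" by (simp add: plus_sq.rep_eq)
lemma Rep_sq_diff: "Rep_sq (a - b) = Rep_sq a - Rep_sq b" by (simp add: minus_sq.rep_eq)
lemma Rep_sq_minus: "Rep_sq (- a) = - Rep_sq a" by (simp add: uminus_sq.rep_eq)
lemma Rep_sq_mult: "Rep_sq (a * b) = Rep_sq a ** Rep_sq b" by (simp add: times_sq.rep_eq)
lemma Rep_sq_scaleR: "Rep_sq (r *\<^sub>R a) = r *\<^sub>R Rep_sq a" by (simp add: scaleR_sq.rep_eq)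
lemma Rep_sq_one: "Rep_sq 1 = mat 1" by (simp add: one_sq.rep_eq)

lemmas Rep_sq_simps = Rep_sq_add Rep_sq_diff Rep_sq_minus Rep_sq_mult Rep_sq_scaleR Rep_sq_one
  Abs_sq_inverse[OF UNIV_I] Rep_sq_inverse

lemma bounded_linear_Rep_sq: "bounded_linear (Rep_sq :: 'n::finite sq \<Rightarrow> _)"
  by (rule bounded_linear_intro[where K="real (CARD('n)) ^ 2"])
     (auto simp: Rep_sq_add Rep_sq_scaleR, metis mult.commute norm_Rep_sq_le)

lemma Rep_sq_power: "Rep_sq (a ^ n) = mpow (Rep_sq a) n"
  by (induction n) (auto simp: Rep_sq_one Rep_sq_mult)

lemma mexp_eq_exp: "mexp A = Rep_sq (exp (Abs_sq A))"
proof -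
  have "Rep_sq (exp (Abs_sq A)) = (\<Sum>n. Rep_sq (Abs_sq A ^ n /\<^sub>R fact n))"
    unfolding exp_def by (rule bounded_linear.suminf[OF bounded_linear_Rep_sq summable_exp_generic])
  also have "\<dots> = mexp A"
    unfolding mexp_def by (simp add: Rep_sq_scaleR Rep_sq_power Abs_sq_inverse)
  finally show ?thesis ..
qed

section \<open>Two-sided units\<close>

definition ring_unit :: "'a::ring_1 \<Rightarrow> bool" where
  "ring_unit z \<longleftrightarrow> (\<exists>w. z * w = 1 \<and> w * z = 1)"

definition ring_inv :: "'a::ring_1 \<Rightarrow> 'a" where
  "ring_inv z = (SOME w. z * w = 1 \<and> w * z = 1)"

lemma ring_inv:
  assumes "ring_unit z"
  shows "z * ring_inv z = 1" "ring_inv z * z = 1"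
  using someI_ex[OF assms[unfolded ring_unit_def]] unfolding ring_inv_def by auto

lemma ring_inv_eqI:
  assumes "z * w = 1" "w * z = 1"
  shows "ring_unit z" "ring_inv z = w"
proof -
  show unit: "ring_unit z" using assms by (auto simp: ring_unit_def)
  have "ring_inv z = ring_inv z * (z * w)" using assms by simp
  also have "\<dots> = w" using ring_inv(2)[OF unit] by (simp flip: mult.assoc)
  finally show "ring_inv z = w" .
qed

lemma ring_unit_mult:
  assumes "ring_unit a" "ring_unit b"
  shows "ring_unit (a * b)" "ring_inv (a * b) = ring_inv b * ring_inv a"
proof -
  have "(a * b) * (ring_inv b * ring_inv a) = a * (b * ring_inv b) * ring_inv a"
    "(ring_inv b * ring_inv a) * (a * b) = ring_inv b * (ring_inv a * a) * b"
    by (simp_all only: mult.assoc)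
  then have "(a * b) * (ring_inv b * ring_inv a) = 1" "(ring_inv b * ring_inv a) * (a * b) = 1"
    using ring_inv[OF assms(1)] ring_inv[OF assms(2)] by simp_all
  then show "ring_unit (a * b)" "ring_inv (a * b) = ring_inv b * ring_inv a"
    by (rule ring_inv_eqI)+
qed

text \<open>In the matrix algebra the units are the invertible matrices, and \<open>ring_inv\<close>
  is \<open>matrix_inv\<close>; the units form an open set since they are where \<open>det\<close> is nonzero.\<close>

lemma ring_unit_sq_iff: "ring_unit z \<longleftrightarrow> invertible (Rep_sq z)"
proof
  assume "ring_unit z"
  then show "invertible (Rep_sq z)"
    unfolding invertible_def using ring_inv[of z]
    by (metis Rep_sq_mult Rep_sq_one)
next
  assume "invertible (Rep_sq z)"
  then obtain A where "Rep_sq z ** A = mat 1" "A ** Rep_sq z = mat 1"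
    unfolding invertible_def by blast
  then have "z * Abs_sq A = 1" "Abs_sq A * z = 1"
    by (simp_all add: Rep_sq_inject[symmetric] Rep_sq_simps)
  then show "ring_unit z" by (rule ring_inv_eqI)
qed

lemma Rep_sq_ring_inv:
  assumes "ring_unit z"
  shows "Rep_sq (ring_inv z) = matrix_inv (Rep_sq z)"
proof -
  have "Rep_sq z ** matrix_inv (Rep_sq z) = mat 1 \<and> matrix_inv (Rep_sq z) ** Rep_sq z = mat 1"
    using assms unfolding ring_unit_sq_iff invertible_def matrix_inv_def by (rule someI_ex)
  then have "ring_inv z = Abs_sq (matrix_inv (Rep_sq z))"
    by (intro ring_inv_eqI(2)) (simp_all add: Rep_sq_inject[symmetric] Rep_sq_simps)
  then show ?thesis by (simp add: Abs_sq_inverse)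
qed

lemma open_ring_units_sq: "open {z :: 'n::finite sq. ring_unit z}"
proof -
  have entry: "continuous_on UNIV (\<lambda>A::complex^'n^'n. A $ i $ j)" for i j
    by (intro linear_continuous_on bounded_linear_compose[OF bounded_linear_vec_nth bounded_linear_vec_nth])
  have "continuous_on UNIV (\<lambda>A::complex^'n^'n. det A)"
    unfolding det_def by (intro continuous_intros entry)
  then have "continuous_on UNIV (\<lambda>z::'n sq. det (Rep_sq z))"
    using continuous_on_compose2[OF _ linear_continuous_on[OF bounded_linear_Rep_sq]] by blast
  then show ?thesis
    unfolding ring_unit_sq_iff invertible_det_nz by (rule open_Collect_neq[OF _ continuous_on_const])
qed

section \<open>Calculus in Banach algebras\<close>

lemma exp_mult_commute:
  fixes x z :: "'a::{real_normed_algebra_1,banach}"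
  assumes "x * z = z * x"
  shows "x * exp z = exp z * x"
proof -
  have "x * exp z = (\<Sum>n. x * (z ^ n /\<^sub>R fact n))"
    unfolding exp_def by (rule suminf_mult[OF summable_exp_generic, symmetric])
  also have "\<dots> = (\<Sum>n. (z ^ n /\<^sub>R fact n) * x)"
    using power_commuting_commutes[OF assms[symmetric]]
    by (simp add: mult_scaleR_left mult_scaleR_right)
  also have "\<dots> = exp z * x"
    unfolding exp_def by (rule suminf_mult2[OF summable_exp_generic, symmetric])
  finally show ?thesis .
qed

lemma exp_two_param_has_vector_derivative:
  fixes a b :: "'a::{real_normed_algebra_1,banach}"
  assumes ab: "a * b = b * a"
  shows "((\<lambda>t. exp (y *\<^sub>R a + t *\<^sub>R b)) has_vector_derivative exp (y *\<^sub>R a + t *\<^sub>R b) * b) (at t)"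
proof -
  have split: "exp (y *\<^sub>R a + t *\<^sub>R b) = exp (y *\<^sub>R a) * exp (t *\<^sub>R b)" for t
    by (rule exp_add_commuting) (simp add: ab)
  have "((\<lambda>t. exp (y *\<^sub>R a) * exp (t *\<^sub>R b)) has_vector_derivative
         exp (y *\<^sub>R a) * (exp (t *\<^sub>R b) * b)) (at t)"
    by (intro has_vector_derivative_mult_right exp_scaleR_has_vector_derivative_right)
  then show ?thesis unfolding split by (simp add: mult.assoc)
qed

lemma has_vector_derivative_iff_quotient:
  fixes f :: "real \<Rightarrow> 'a::real_normed_vector"
  shows "(f has_vector_derivative D) (at x) \<longleftrightarrow> ((\<lambda>y. (f y - f x) /\<^sub>R (y - x)) \<longlongrightarrow> D) (at x)"
proof -
  have quot: "norm ((a - h *\<^sub>R D) /\<^sub>R norm h) = norm (a /\<^sub>R h - D)" if "h \<noteq> 0" for a and h :: real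
  proof -
    have "a /\<^sub>R h - D = (1/h) *\<^sub>R (a - h *\<^sub>R D)"
      using that by (simp add: scaleR_diff_right inverse_eq_divide)
    then show ?thesis by (simp add: divide_inverse)
  qed
  have ev: "\<forall>\<^sub>F y in at x. norm (((f y - f x) - (y - x) *\<^sub>R D) /\<^sub>R norm (y - x))
                          = norm ((f y - f x) /\<^sub>R (y - x) - D)"
    unfolding eventually_at_filter by (intro always_eventually allI impI quot) simp
  have "(f has_vector_derivative D) (at x) \<longleftrightarrow>
        ((\<lambda>y. ((f y - f x) - (y - x) *\<^sub>R D) /\<^sub>R norm (y - x)) \<longlongrightarrow> 0) (at x)"
    unfolding has_vector_derivative_def has_derivative_at_within
    by (simp add: bounded_linear_scaleR_left)
  also have "\<dots> \<longleftrightarrow> ((\<lambda>y. norm (((f y - f x) - (y - x) *\<^sub>R D) /\<^sub>R norm (y - x))) \<longlongrightarrow> 0) (at x)"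
    by (rule tendsto_norm_zero_iff[symmetric])
  also have "\<dots> \<longleftrightarrow> ((\<lambda>y. norm ((f y - f x) /\<^sub>R (y - x) - D)) \<longlongrightarrow> 0) (at x)"
    by (rule tendsto_cong[OF ev])
  also have "\<dots> \<longleftrightarrow> ((\<lambda>y. (f y - f x) /\<^sub>R (y - x)) \<longlongrightarrow> D) (at x)"
    by (simp add: tendsto_norm_zero_iff LIM_zero_iff)
  finally show ?thesis .
qed

lemma inverse_difference:
  fixes g p g0 p0 :: "'a::ring_1"
  assumes "p * g = 1" "g0 * p0 = 1"
  shows "p - p0 = p * (g0 - g) * p0"
proof -
  have "p * (g0 - g) * p0 = p * (g0 * p0) - (p * g) * p0"
    by (simp add: algebra_simps mult.assoc)
  then show ?thesis using assms by simp
qed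

lemma inverse_perturbation_bound:
  fixes g p g0 p0 :: "'a::real_normed_algebra_1"
  assumes "p * g = 1" "g0 * p0 = 1" and close: "norm (g - g0) * norm p0 < 1/2"
  shows "norm (p - p0) \<le> 2 * norm p0 * norm p0 * norm (g - g0)"
proof -
  define h c where "h = norm (g - g0)" and "c = norm p0"
  have h: "h \<ge> 0" "h * c < 1/2" and c: "c \<ge> 0" using close by (auto simp: h_def c_def)
  have "norm (p - p0) \<le> norm p * h * c"
    unfolding inverse_difference[OF assms(1,2)] h_def c_def norm_minus_commute[of g]
    by (meson norm_mult_ineq order_trans mult_right_mono norm_ge_zero)
  also have "\<dots> \<le> (c + norm (p - p0)) * h * c"
    using norm_triangle_ineq[of p0 "p - p0"] h c
    by (intro mult_right_mono) (auto simp: c_def)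
  finally have "norm (p - p0) * (1 - h * c) \<le> c * h * c" by (simp add: algebra_simps)
  moreover have "norm (p - p0) * (1/2) \<le> norm (p - p0) * (1 - h * c)"
    using h by (intro mult_left_mono) auto
  ultimately show ?thesis by (simp add: h_def c_def algebra_simps)
qed

lemma inverse_isCont:
  fixes G P :: "real \<Rightarrow> 'a::real_normed_algebra_1"
  assumes cG: "isCont G x"
    and ev: "\<forall>\<^sub>F y in nhds x. G y * P y = 1 \<and> P y * G y = 1"
  shows "isCont P x"
proof -
  have inv0: "G x * P x = 1" using eventually_nhds_x_imp_x[OF ev] by auto
  have ev': "\<forall>\<^sub>F y in at x. G y * P y = 1 \<and> P y * G y = 1"
    using ev by (auto simp: eventually_at_filter elim: eventually_mono)
  define c where "c = norm (P x)"
  have G_lim: "((\<lambda>y. norm (G y - G x)) \<longlongrightarrow> 0) (at x)"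
    using cG by (simp add: isCont_def tendsto_norm_zero_iff LIM_zero_iff)
  have close: "\<forall>\<^sub>F y in at x. norm (G y - G x) * c < 1/2"
  proof (cases "c = 0")
    case False
    then have "c > 0" by (simp add: c_def)
    then have "\<forall>\<^sub>F y in at x. norm (G y - G x) < 1/(2*c)"
      by (intro order_tendstoD[OF G_lim]) auto
    then show ?thesis
      by eventually_elim (use \<open>c > 0\<close> in \<open>auto simp: field_simps\<close>)
  qed simp
  have bound: "\<forall>\<^sub>F y in at x. norm (P y - P x) \<le> 2 * c * c * norm (G y - G x)"
    using close ev' by eventually_elim (use inverse_perturbation_bound inv0 in \<open>auto simp: c_def\<close>)
  have bound_lim: "((\<lambda>y. 2 * c * c * norm (G y - G x)) \<longlongrightarrow> 0) (at x)"
    using G_lim by (intro tendsto_mult_right_zero)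
  have "((\<lambda>y. norm (P y - P x)) \<longlongrightarrow> 0) (at x)"
    by (rule tendsto_sandwich[where f="\<lambda>_. 0", OF _ bound tendsto_const bound_lim]) simp
  then show ?thesis by (simp add: isCont_def tendsto_norm_zero_iff LIM_zero_iff)
qed

lemma inverse_has_vector_derivative:
  fixes G P :: "real \<Rightarrow> 'a::real_normed_algebra_1"
  assumes dG: "(G has_vector_derivative G') (at x)"
    and ev: "\<forall>\<^sub>F y in nhds x. G y * P y = 1 \<and> P y * G y = 1"
  shows "(P has_vector_derivative (- (P x * G' * P x))) (at x)"
proof -
  have inv0: "G x * P x = 1" using eventually_nhds_x_imp_x[OF ev] by auto
  have ev': "\<forall>\<^sub>F y in at x. G y * P y = 1 \<and> P y * G y = 1"
    using ev by (auto simp: eventually_at_filter elim: eventually_mono)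
  have "isCont P x"
    by (rule inverse_isCont[OF has_vector_derivative_continuous[OF dG] ev])
  moreover have "((\<lambda>y. (G y - G x) /\<^sub>R (y - x)) \<longlongrightarrow> G') (at x)"
    using dG has_vector_derivative_iff_quotient by blast
  ultimately have lim: "((\<lambda>y. - (P y * ((G y - G x) /\<^sub>R (y - x)) * P x)) \<longlongrightarrow> - (P x * G' * P x)) (at x)"
    by (intro tendsto_intros) (auto simp: isCont_def)
  have "\<forall>\<^sub>F y in at x. - (P y * ((G y - G x) /\<^sub>R (y - x)) * P x) = (P y - P x) /\<^sub>R (y - x)"
    using ev'
  proof eventually_elim
    case (elim y)
    then have "P y - P x = - (P y * (G y - G x) * P x)"
      using inverse_difference[of "P y" "G y" "G x" "P x"] inv0 by (simp add: algebra_simps)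
    then show ?case by (simp add: mult_scaleR_left mult_scaleR_right)
  qed
  from Lim_transform_eventually[OF lim this] show ?thesis
    unfolding has_vector_derivative_iff_quotient .
qed

lemma ring_inv_has_vector_derivative:
  fixes G :: "real \<Rightarrow> 'a::real_normed_algebra_1"
  assumes units: "open {z::'a. ring_unit z}"
    and dG: "(G has_vector_derivative G') (at x)" and unit: "ring_unit (G x)"
  shows "((\<lambda>y. ring_inv (G y)) has_vector_derivative - (ring_inv (G x) * G' * ring_inv (G x))) (at x)"
proof -
  have "(G \<longlongrightarrow> G x) (at x)"
    using has_vector_derivative_continuous[OF dG] by (simp add: isCont_def)
  then have "\<forall>\<^sub>F y in at x. G y \<in> {z. ring_unit z}"
    using units unit by (auto simp: tendsto_def)
  then have "\<forall>\<^sub>F y in nhds x. ring_unit (G y)"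
    using unit by (auto simp: eventually_at_filter elim: eventually_mono)
  then have "\<forall>\<^sub>F y in nhds x. G y * ring_inv (G y) = 1 \<and> ring_inv (G y) * G y = 1"
    by (rule eventually_mono) (simp add: ring_inv)
  then show ?thesis by (rule inverse_has_vector_derivative[OF dG])
qed

lemma open_ring_unit_preimage:
  fixes f :: "'b::topological_space \<Rightarrow> 'a::real_normed_algebra_1"
  assumes "open {z::'a. ring_unit z}" and "continuous_on UNIV f"
  shows "open {y. ring_unit (f y)}"
proof -
  have "open (f -` {z. ring_unit z} \<inter> UNIV)"
    using continuous_on_open_vimage[OF open_UNIV, of f] assms by blast
  then show ?thesis by (simp add: vimage_def)
qed

section \<open>The formal Riccati hierarchy\<close>

text \<open>If \<open>p\<close> satisfies the Riccati equation \<open>p\<^sub>x = riccati_x s d p\<close>, then its higher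
  \<open>x\<close>-derivatives are the following polynomials in \<open>s\<close>, \<open>d\<close>, \<open>p\<close>; \<open>riccati_lin s d p q\<close>
  is the derivative of \<open>riccati_x s d p\<close> in direction \<open>q\<close>.  Likewise \<open>riccati_t\<close> is the
  time flow and \<open>riccati_xt\<close> the \<open>t\<close>-derivative of \<open>p\<^sub>x\<close>, while \<open>riccati_sq_x\<close>
  is the \<open>x\<close>-derivative of \<open>p\<^sub>x d p\<^sub>x\<close>.\<close>

definition riccati_x :: "'a::ring_1 \<Rightarrow> 'a \<Rightarrow> 'a \<Rightarrow> 'a" where
  "riccati_x s d p = - (s * p + p * s) - p * d * p"

definition riccati_lin :: "'a::ring_1 \<Rightarrow> 'a \<Rightarrow> 'a \<Rightarrow> 'a \<Rightarrow> 'a" where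
  "riccati_lin s d p q = - (s * q + q * s) - (q * d * p + p * d * q)"

definition riccati_xx :: "'a::ring_1 \<Rightarrow> 'a \<Rightarrow> 'a \<Rightarrow> 'a" where
  "riccati_xx s d p = riccati_lin s d p (riccati_x s d p)"

definition riccati_xxx :: "'a::ring_1 \<Rightarrow> 'a \<Rightarrow> 'a \<Rightarrow> 'a" where
  "riccati_xxx s d p = riccati_lin s d p (riccati_xx s d p)
     - (riccati_x s d p * d * riccati_x s d p + riccati_x s d p * d * riccati_x s d p)"

definition riccati_sq_x :: "'a::ring_1 \<Rightarrow> 'a \<Rightarrow> 'a \<Rightarrow> 'a" where
  "riccati_sq_x s d p = riccati_xx s d p * d * riccati_x s d p + riccati_x s d p * d * riccati_xx s d p"

definition riccati_xxxx :: "'a::ring_1 \<Rightarrow> 'a \<Rightarrow> 'a \<Rightarrow> 'a" where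
  "riccati_xxxx s d p = riccati_lin s d p (riccati_xxx s d p)
     - (riccati_sq_x s d p + riccati_sq_x s d p + riccati_sq_x s d p)"

definition riccati_t :: "'a::ring_1 \<Rightarrow> 'a \<Rightarrow> 'a \<Rightarrow> 'a" where
  "riccati_t s d p = - (s * s * s * p + p * s * s * s) - p * (s * s * d - s * d * s + d * s * s) * p"

definition riccati_xt :: "'a::ring_1 \<Rightarrow> 'a \<Rightarrow> 'a \<Rightarrow> 'a" where
  "riccati_xt s d p = riccati_lin s d p (riccati_t s d p)"

lemmas product_vector_derivative_rules = has_vector_derivative_diff has_vector_derivative_minus
  has_vector_derivative_add has_vector_derivative_mult_right has_vector_derivative_mult_left
  has_vector_derivative_mult

lemma riccati_x_has_vector_derivative:
  fixes s d :: "'a::real_normed_algebra_1"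
  assumes "(P has_vector_derivative P') (at y)"
  shows "((\<lambda>y. riccati_x s d (P y)) has_vector_derivative riccati_lin s d (P y) P') (at y)"
  unfolding riccati_x_def
  by (rule has_vector_derivative_eq_rhs, (rule product_vector_derivative_rules assms)+)
     (simp add: riccati_lin_def algebra_simps)

lemma riccati_x_tower:
  fixes s d :: "'a::real_normed_algebra_1"
  assumes dP: "(P has_vector_derivative riccati_x s d (P y)) (at y)"
  shows "((\<lambda>y. riccati_x s d (P y)) has_vector_derivative riccati_xx s d (P y)) (at y)"
    and "((\<lambda>y. riccati_xx s d (P y)) has_vector_derivative riccati_xxx s d (P y)) (at y)"
    and "((\<lambda>y. riccati_xxx s d (P y)) has_vector_derivative riccati_xxxx s d (P y)) (at y)"
    and "((\<lambda>y. riccati_x s d (P y) * d * riccati_x s d (P y)) has_vector_derivative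
           riccati_sq_x s d (P y)) (at y)"
proof -
  show d1: "((\<lambda>y. riccati_x s d (P y)) has_vector_derivative riccati_xx s d (P y)) (at y)"
    unfolding riccati_xx_def by (rule riccati_x_has_vector_derivative[OF dP])
  show d2: "((\<lambda>y. riccati_xx s d (P y)) has_vector_derivative riccati_xxx s d (P y)) (at y)"
    unfolding riccati_xx_def riccati_lin_def
    by (rule has_vector_derivative_eq_rhs, (rule product_vector_derivative_rules dP d1)+)
       (simp add: riccati_xxx_def riccati_xx_def riccati_lin_def algebra_simps)
  show "((\<lambda>y. riccati_xxx s d (P y)) has_vector_derivative riccati_xxxx s d (P y)) (at y)"
    unfolding riccati_xxx_def riccati_lin_def
    by (rule has_vector_derivative_eq_rhs, (rule product_vector_derivative_rules dP d1 d2)+)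
       (simp add: riccati_xxxx_def riccati_sq_x_def riccati_lin_def algebra_simps)
  show "((\<lambda>y. riccati_x s d (P y) * d * riccati_x s d (P y)) has_vector_derivative
           riccati_sq_x s d (P y)) (at y)"
    by (rule has_vector_derivative_eq_rhs, (rule product_vector_derivative_rules d1)+)
       (simp add: riccati_sq_x_def algebra_simps)
qed

lemma riccati_of_inverse:
  fixes P G E k c :: "'a::real_algebra_1"
  assumes PG: "P * G = 1" and GP: "G * P = 1" and G: "G = E - k" and Ec: "E * c = c * E"
  shows "- (P * (E * (2 *\<^sub>R c)) * P) = riccati_x c (c * k + k * c) P"
proof -
  have E: "E = G + k" using G by simp
  have left: "P * E * c * P = c * P + P * k * c * P"
    unfolding E using PG GP by (simp add: algebra_simps flip: mult.assoc)
  have "P * E * c * P = P * c * E * P" by (simp add: mult.assoc Ec)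
  also have "\<dots> = P * c + P * c * k * P"
    unfolding E using GP by (simp add: algebra_simps mult.assoc)
  finally have right: "P * E * c * P = P * c + P * c * k * P" .
  have "P * (E * (2 *\<^sub>R c)) * P = P * E * c * P + P * E * c * P"
    by (simp add: scaleR_2 algebra_simps)
  also have "\<dots> = c * P + P * k * c * P + (P * c + P * c * k * P)" using left right by simp
  finally show ?thesis unfolding riccati_x_def by (simp add: algebra_simps)
qed

lemma riccati_t_eq_riccati_x_cube:
  "riccati_t s (s * k + k * s) p = riccati_x (s * s * s) (s * s * s * k + k * (s * s * s)) p"
  unfolding riccati_t_def riccati_x_def by (simp add: algebra_simps)

text \<open>The constraint linking the two flows: \<open>P\<close> almost commutes with \<open>s\<^sup>2\<close>.\<close>

lemma inverse_square_relation:
  fixes P G E k s :: "'a::ring_1"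
  assumes PG: "P * G = 1" and GP: "G * P = 1" and G: "G = E - k" and Es: "E * s = s * E"
  shows "P * s * s = s * s * P - P * s * (s * k + k * s) * P + P * (s * k + k * s) * s * P"
proof -
  have Es2: "E * (s * s) = (s * s) * E" by (simp add: Es flip: mult.assoc) (simp add: mult.assoc Es)
  have "s * s * P - P * s * s = P * (G * (s * s)) * P - P * ((s * s) * G) * P"
    using PG GP by (simp add: mult.assoc) (simp flip: mult.assoc)
  also have "\<dots> = P * (s * s * k - k * s * s) * P"
    using Es2 unfolding G by (simp add: algebra_simps mult.assoc)
  finally show ?thesis by (simp add: algebra_simps)
qed

text \<open>The algebraic core of the KdV equation: under that constraint,
  \<open>4 p\<^sub>x\<^sub>t = p\<^sub>x\<^sub>x\<^sub>x\<^sub>x + 6 (p\<^sub>x d p\<^sub>x)\<^sub>x\<close>.\<close>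

lemma kdv_identity_ring:
  fixes s d p :: "'a::ring_1"
  assumes rel: "p * s * s = s * s * p - p * s * d * p + p * d * s * p"
  shows "riccati_xt s d p + riccati_xt s d p + riccati_xt s d p + riccati_xt s d p
       = riccati_xxxx s d p + (riccati_sq_x s d p + riccati_sq_x s d p + riccati_sq_x s d p
           + riccati_sq_x s d p + riccati_sq_x s d p + riccati_sq_x s d p)"
proof -
  have r1: "\<And>X. p * (s * (s * X)) = s * (s * (p * X)) - p * (s * (d * (p * X))) + p * (d * (s * (p * X)))"
    using rel by (metis (no_types, lifting) mult.assoc left_diff_distrib distrib_right)
  have r0: "p * (s * s) = s * (s * p) - p * (s * (d * p)) + p * (d * (s * p))"
    using rel by (simp add: mult.assoc)
  show ?thesis
    unfolding riccati_xt_def riccati_t_def riccati_xxxx_def riccati_sq_x_def riccati_xxx_def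
      riccati_xx_def riccati_lin_def riccati_x_def
    by (simp add: algebra_simps r1 r0)
qed

lemma kdv_identity:
  fixes s d p :: "'a::real_algebra_1"
  assumes "p * s * s = s * s * p - p * s * d * p + p * d * s * p"
  shows "riccati_xt s d p - (1/4) *\<^sub>R riccati_xxxx s d p - (3/2) *\<^sub>R riccati_sq_x s d p = 0"
proof -
  have four: "(4::real) *\<^sub>R q = q + q + q + q" and six: "(6::real) *\<^sub>R q = q + q + q + q + q + q" for q :: 'a
  proof -
    have "(4::real) *\<^sub>R q = (1 + 1 + 1 + 1) *\<^sub>R q" "(6::real) *\<^sub>R q = (1 + 1 + 1 + 1 + 1 + 1) *\<^sub>R q"
      by simp_all
    then show "(4::real) *\<^sub>R q = q + q + q + q" "(6::real) *\<^sub>R q = q + q + q + q + q + q"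
      by (simp_all only: scaleR_add_left scaleR_one)
  qed
  have scaled: "(4::real) *\<^sub>R riccati_xt s d p = riccati_xxxx s d p + (6::real) *\<^sub>R riccati_sq_x s d p"
    unfolding four six kdv_identity_ring[OF assms] ..
  have "riccati_xt s d p = (1/4) *\<^sub>R ((4::real) *\<^sub>R riccati_xt s d p)" by simp
  also have "\<dots> = (1/4) *\<^sub>R riccati_xxxx s d p + (3/2) *\<^sub>R riccati_sq_x s d p"
    unfolding scaled by (simp add: scaleR_add_right)
  finally show ?thesis by simp
qed

section \<open>The resolvent flow in a Banach algebra\<close>

definition xi :: "'a::{real_normed_algebra_1,banach} \<Rightarrow> real \<Rightarrow> real \<Rightarrow> 'a" where
  "xi s y t = exp (- 2 *\<^sub>R (y *\<^sub>R s + t *\<^sub>R (s * s * s)))"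

definition xi_inv :: "'a::{real_normed_algebra_1,banach} \<Rightarrow> real \<Rightarrow> real \<Rightarrow> 'a" where
  "xi_inv s y t = exp (y *\<^sub>R (2 *\<^sub>R s) + t *\<^sub>R (2 *\<^sub>R (s * s * s)))"

definition resolvent :: "'a::{real_normed_algebra_1,banach} \<Rightarrow> 'a \<Rightarrow> real \<Rightarrow> real \<Rightarrow> 'a" where
  "resolvent s k y t = xi s y t * ring_inv (1 - k * xi s y t)"

lemma xi_xi_inv: "xi s y t * xi_inv s y t = 1" "xi_inv s y t * xi s y t = 1"
proof -
  have arg: "- 2 *\<^sub>R (y *\<^sub>R s + t *\<^sub>R (s * s * s)) = - (y *\<^sub>R (2 *\<^sub>R s) + t *\<^sub>R (2 *\<^sub>R (s * s * s)))"
    by (simp add: algebra_simps)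
  show "xi_inv s y t * xi s y t = 1"
    unfolding xi_def xi_inv_def arg by (rule exp_minus_inverse)
  show "xi s y t * xi_inv s y t = 1"
    using exp_minus_inverse[of "- (y *\<^sub>R (2 *\<^sub>R s) + t *\<^sub>R (2 *\<^sub>R (s * s * s)))"]
    unfolding xi_def xi_inv_def arg minus_minus .
qed

lemma xi_inv_commute: "xi_inv s y t * s = s * xi_inv s y t"
  unfolding xi_inv_def
  by (rule exp_mult_commute[symmetric]) (simp add: distrib_left distrib_right mult.assoc)

lemma xi_inv_has_vector_derivative:
  shows "((\<lambda>y. xi_inv s y t) has_vector_derivative xi_inv s y t * (2 *\<^sub>R s)) (at y)"
    and "((\<lambda>t. xi_inv s y t) has_vector_derivative xi_inv s y t * (2 *\<^sub>R (s * s * s))) (at t)"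
proof -
  have comm: "(2 *\<^sub>R s) * (2 *\<^sub>R (s * s * s)) = (2 *\<^sub>R (s * s * s)) * (2 *\<^sub>R s)"
    by (simp add: mult.assoc)
  have swap: "xi_inv s y t = exp (t *\<^sub>R (2 *\<^sub>R (s * s * s)) + y *\<^sub>R (2 *\<^sub>R s))" for y t
    unfolding xi_inv_def by (simp add: add.commute)
  show "((\<lambda>y. xi_inv s y t) has_vector_derivative xi_inv s y t * (2 *\<^sub>R s)) (at y)"
    unfolding swap by (rule exp_two_param_has_vector_derivative[OF comm[symmetric]])
  show "((\<lambda>t. xi_inv s y t) has_vector_derivative xi_inv s y t * (2 *\<^sub>R (s * s * s))) (at t)"
    unfolding xi_inv_def by (rule exp_two_param_has_vector_derivative[OF comm])
qed

text \<open>\<open>1 - k \<Xi>\<close> is a unit iff \<open>\<Xi>\<^sup>-\<^sup>1 - k = (1 - k \<Xi>) \<Xi>\<^sup>-\<^sup>1\<close> is, and then the resolvent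
  is the inverse of \<open>\<Xi>\<^sup>-\<^sup>1 - k\<close>.\<close>

lemma resolvent_as_inverse:
  assumes "ring_unit (1 - k * xi s y t)"
  shows "ring_unit (xi_inv s y t - k)" "ring_inv (xi_inv s y t - k) = resolvent s k y t"
proof -
  have xi_inv_unit: "ring_unit (xi_inv s y t)" "ring_inv (xi_inv s y t) = xi s y t"
    using ring_inv_eqI[OF xi_xi_inv(2)[of s y t] xi_xi_inv(1)[of s y t]] by simp_all
  have factor: "xi_inv s y t - k = (1 - k * xi s y t) * xi_inv s y t"
    by (simp add: algebra_simps mult.assoc xi_xi_inv)
  show "ring_unit (xi_inv s y t - k)" "ring_inv (xi_inv s y t - k) = resolvent s k y t"
    unfolding factor resolvent_def using ring_unit_mult[OF assms xi_inv_unit(1)] xi_inv_unit(2)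
    by simp_all
qed

lemma resolvent_domain_iff: "ring_unit (1 - k * xi s y t) \<longleftrightarrow> ring_unit (xi_inv s y t - k)"
proof
  assume "ring_unit (xi_inv s y t - k)"
  moreover have "ring_unit (xi s y t)" using ring_inv_eqI(1)[OF xi_xi_inv[of s y t]] .
  moreover have "1 - k * xi s y t = (xi_inv s y t - k) * xi s y t"
    by (simp add: algebra_simps xi_xi_inv)
  ultimately show "ring_unit (1 - k * xi s y t)" using ring_unit_mult(1) by metis
qed (rule resolvent_as_inverse(1))

lemma open_resolvent_domain:
  fixes s k :: "'a::{real_normed_algebra_1,banach}"
  assumes units: "open {z::'a. ring_unit z}"
  shows "open {y. ring_unit (1 - k * xi s y t)}" and "open {t. ring_unit (1 - k * xi s y t)}"
proof -
  have "continuous_on UNIV (\<lambda>y. xi_inv s y t)" "continuous_on UNIV (\<lambda>t. xi_inv s y t)"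
    using xi_inv_has_vector_derivative by (auto intro!: continuous_on_vector_derivative)
  then have "continuous_on UNIV (\<lambda>y. xi_inv s y t - k)" "continuous_on UNIV (\<lambda>t. xi_inv s y t - k)"
    by (auto intro: continuous_on_diff)
  then show "open {y. ring_unit (1 - k * xi s y t)}" "open {t. ring_unit (1 - k * xi s y t)}"
    unfolding resolvent_domain_iff by (auto intro: open_ring_unit_preimage[OF units])
qed

lemma ring_inv_riccati:
  fixes E :: "real \<Rightarrow> 'a::real_normed_algebra_1"
  assumes units: "open {z::'a. ring_unit z}"
    and dE: "(E has_vector_derivative E x * (2 *\<^sub>R c)) (at x)" and comm: "E x * c = c * E x"
    and unit: "ring_unit (E x - k)"
  shows "((\<lambda>y. ring_inv (E y - k)) has_vector_derivative riccati_x c (c * k + k * c) (ring_inv (E x - k))) (at x)"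
proof -
  have "((\<lambda>y. E y - k) has_vector_derivative E x * (2 *\<^sub>R c)) (at x)"
    using has_vector_derivative_diff[OF dE has_vector_derivative_const] by simp
  from ring_inv_has_vector_derivative[OF units this unit] show ?thesis
    using riccati_of_inverse[OF ring_inv(2,1)[OF unit] refl comm] by simp
qed

lemma resolvent_has_vector_derivative:
  fixes s k :: "'a::{real_normed_algebra_1,banach}"
  assumes units: "open {z::'a. ring_unit z}" and unit: "ring_unit (1 - k * xi s y t)"
  shows "((\<lambda>y. resolvent s k y t) has_vector_derivative riccati_x s (s * k + k * s) (resolvent s k y t)) (at y)"
    and "((\<lambda>t. resolvent s k y t) has_vector_derivative riccati_t s (s * k + k * s) (resolvent s k y t)) (at t)"
proof -
  note inv = resolvent_as_inverse[OF unit]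
  have "((\<lambda>y. ring_inv (xi_inv s y t - k)) has_vector_derivative
          riccati_x s (s * k + k * s) (resolvent s k y t)) (at y)"
    using ring_inv_riccati[OF units xi_inv_has_vector_derivative(1) xi_inv_commute inv(1)] inv(2)
    by simp
  then show "((\<lambda>y. resolvent s k y t) has_vector_derivative riccati_x s (s * k + k * s) (resolvent s k y t)) (at y)"
    by (rule has_vector_derivative_transform_within_open[OF _ open_resolvent_domain(1)[OF units]])
       (use unit resolvent_as_inverse(2) in auto)
  have comm3: "xi_inv s y t * (s * s * s) = (s * s * s) * xi_inv s y t"
    by (metis xi_inv_commute mult.assoc)
  have "((\<lambda>t. ring_inv (xi_inv s y t - k)) has_vector_derivative
          riccati_t s (s * k + k * s) (resolvent s k y t)) (at t)"
    using ring_inv_riccati[OF units xi_inv_has_vector_derivative(2) comm3 inv(1)] inv(2)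
    by (simp add: riccati_t_eq_riccati_x_cube)
  then show "((\<lambda>t. resolvent s k y t) has_vector_derivative riccati_t s (s * k + k * s) (resolvent s k y t)) (at t)"
    by (rule has_vector_derivative_transform_within_open[OF _ open_resolvent_domain(2)[OF units]])
       (use unit resolvent_as_inverse(2) in auto)
qed

lemma resolvent_tower:
  fixes s k :: "'a::{real_normed_algebra_1,banach}"
  assumes units: "open {z::'a. ring_unit z}" and unit: "ring_unit (1 - k * xi s y t)"
  defines "d \<equiv> s * k + k * s" and "P \<equiv> resolvent s k"
  shows "((\<lambda>y. P y t) has_vector_derivative riccati_x s d (P y t)) (at y)"
    and "((\<lambda>y. riccati_x s d (P y t)) has_vector_derivative riccati_xx s d (P y t)) (at y)"
    and "((\<lambda>y. riccati_xx s d (P y t)) has_vector_derivative riccati_xxx s d (P y t)) (at y)"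
    and "((\<lambda>y. riccati_xxx s d (P y t)) has_vector_derivative riccati_xxxx s d (P y t)) (at y)"
    and "((\<lambda>y. riccati_x s d (P y t) * d * riccati_x s d (P y t)) has_vector_derivative
           riccati_sq_x s d (P y t)) (at y)"
    and "((\<lambda>t. riccati_x s d (P y t)) has_vector_derivative riccati_xt s d (P y t)) (at t)"
proof -
  note P = resolvent_has_vector_derivative[OF units unit, folded d_def P_def]
  show "((\<lambda>y. P y t) has_vector_derivative riccati_x s d (P y t)) (at y)" by (rule P(1))
  show "((\<lambda>y. riccati_x s d (P y t)) has_vector_derivative riccati_xx s d (P y t)) (at y)"
    and "((\<lambda>y. riccati_xx s d (P y t)) has_vector_derivative riccati_xxx s d (P y t)) (at y)"
    and "((\<lambda>y. riccati_xxx s d (P y t)) has_vector_derivative riccati_xxxx s d (P y t)) (at y)"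
    and "((\<lambda>y. riccati_x s d (P y t) * d * riccati_x s d (P y t)) has_vector_derivative
           riccati_sq_x s d (P y t)) (at y)"
    by (rule riccati_x_tower[OF P(1)])+
  show "((\<lambda>t. riccati_x s d (P y t)) has_vector_derivative riccati_xt s d (P y t)) (at t)"
    unfolding riccati_xt_def by (rule riccati_x_has_vector_derivative[OF P(2)])
qed

lemma resolvent_square_relation:
  assumes "ring_unit (1 - k * xi s y t)"
  shows "resolvent s k y t * s * s = s * s * resolvent s k y t
           - resolvent s k y t * s * (s * k + k * s) * resolvent s k y t
           + resolvent s k y t * (s * k + k * s) * s * resolvent s k y t"
  using inverse_square_relation[OF ring_inv(2,1)[OF resolvent_as_inverse(1)[OF assms]] refl xi_inv_commute]
  unfolding resolvent_as_inverse(2)[OF assms] .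

section \<open>Transfer through a bounded linear map\<close>

lemma has_vector_derivative_transfer:
  fixes g :: "real \<Rightarrow> 'a::real_normed_vector" and L :: "'a \<Rightarrow> 'b::real_normed_vector"
  assumes L: "bounded_linear L" and S: "open S" "y \<in> S" and eq: "\<And>z. z \<in> S \<Longrightarrow> f z = L (g z)"
    and dg: "(g has_vector_derivative g') (at y)"
  shows "(f has_vector_derivative L g') (at y)"
  using bounded_linear.has_vector_derivative[OF L dg]
  by (rule has_vector_derivative_transform_within_open[OF _ S]) (simp add: eq)

lemma pdx_eqI: "((\<lambda>z. f z t) has_vector_derivative D) (at y) \<Longrightarrow> pdx f y t = D"
  by (simp add: pdx_def vector_derivative_at)

lemma pdt_eqI: "((\<lambda>z. f y z) has_vector_derivative D) (at t) \<Longrightarrow> pdt f y t = D"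
  by (simp add: pdt_def vector_derivative_at)

lemma resolvent_image_derivatives:
  fixes s k :: "'a::{real_normed_algebra_1,banach}" and L :: "'a \<Rightarrow> complex^'m^'m"
    and phi u :: "real \<Rightarrow> real \<Rightarrow> complex^'m^'m"
  defines "d \<equiv> s * k + k * s" and "P \<equiv> resolvent s k"
  assumes units: "open {z::'a. ring_unit z}" and L: "bounded_linear L"
    and L_mult: "\<And>a b. L a ** L b = L (a * d * b)"
    and phi: "\<And>y t. ring_unit (1 - k * xi s y t) \<Longrightarrow> phi y t = L (P y t)"
    and u: "u = pdx phi" and unit: "ring_unit (1 - k * xi s y t)"
  shows "((\<lambda>z. phi z t) has_vector_derivative u y t) (at y)"
    and "((\<lambda>z. u z t) has_vector_derivative pdx u y t) (at y)"
    and "((\<lambda>z. pdx u z t) has_vector_derivative pdx (pdx u) y t) (at y)"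
    and "((\<lambda>z. pdx (pdx u) z t) has_vector_derivative pdx (pdx (pdx u)) y t) (at y)"
    and "((\<lambda>z. u y z) has_vector_derivative pdt u y t) (at t)"
    and "((\<lambda>z. u z t ** u z t) has_vector_derivative pdx (\<lambda>y s. u y s ** u y s) y t) (at y)"
    and "pdt u y t = L (riccati_xt s d (P y t))"
    and "pdx (pdx (pdx u)) y t = L (riccati_xxxx s d (P y t))"
    and "pdx (\<lambda>y s. u y s ** u y s) y t = L (riccati_sq_x s d (P y t))"
proof -
  define D where "D y t \<longleftrightarrow> ring_unit (1 - k * xi s y t)" for y t
  have Dx: "open {z. D z t}" and Dt: "open {z. D y z}" for y t
    unfolding D_def using open_resolvent_domain[OF units] by auto
  have tower: "((\<lambda>y. P y t) has_vector_derivative riccati_x s d (P y t)) (at y)"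
    "((\<lambda>y. riccati_x s d (P y t)) has_vector_derivative riccati_xx s d (P y t)) (at y)"
    "((\<lambda>y. riccati_xx s d (P y t)) has_vector_derivative riccati_xxx s d (P y t)) (at y)"
    "((\<lambda>y. riccati_xxx s d (P y t)) has_vector_derivative riccati_xxxx s d (P y t)) (at y)"
    "((\<lambda>y. riccati_x s d (P y t) * d * riccati_x s d (P y t)) has_vector_derivative
       riccati_sq_x s d (P y t)) (at y)"
    "((\<lambda>t. riccati_x s d (P y t)) has_vector_derivative riccati_xt s d (P y t)) (at t)"
    if "D y t" for y t
    by (fact resolvent_tower[OF units that[unfolded D_def], folded d_def P_def])+
  note transfer = has_vector_derivative_transfer[OF L]
  have phi_x: "((\<lambda>z. phi z t) has_vector_derivative L (riccati_x s d (P y t))) (at y)" if "D y t" for y t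
    by (rule transfer[OF Dx[of t] _ _ tower(1)[OF that]]) (simp_all add: that phi[folded D_def])
  have u_eq: "u y t = L (riccati_x s d (P y t))" if "D y t" for y t
    unfolding u by (rule pdx_eqI, rule phi_x[OF that])
  have u_x: "((\<lambda>z. u z t) has_vector_derivative L (riccati_xx s d (P y t))) (at y)" if "D y t" for y t
    by (rule transfer[OF Dx[of t] _ _ tower(2)[OF that]]) (simp_all add: that u_eq)
  have u_x_eq: "pdx u y t = L (riccati_xx s d (P y t))" if "D y t" for y t
    by (rule pdx_eqI, rule u_x[OF that])
  have u_xx: "((\<lambda>z. pdx u z t) has_vector_derivative L (riccati_xxx s d (P y t))) (at y)" if "D y t" for y t
    by (rule transfer[OF Dx[of t] _ _ tower(3)[OF that]]) (simp_all add: that u_x_eq)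
  have u_xx_eq: "pdx (pdx u) y t = L (riccati_xxx s d (P y t))" if "D y t" for y t
    by (rule pdx_eqI, rule u_xx[OF that])
  have Dyt: "D y t" using unit by (simp add: D_def)
  have u_xxx: "((\<lambda>z. pdx (pdx u) z t) has_vector_derivative L (riccati_xxxx s d (P y t))) (at y)"
    by (rule transfer[OF Dx[of t] _ _ tower(4)[OF Dyt]]) (simp_all add: Dyt u_xx_eq)
  have sq_x: "((\<lambda>z. u z t ** u z t) has_vector_derivative L (riccati_sq_x s d (P y t))) (at y)"
    by (rule transfer[OF Dx[of t] _ _ tower(5)[OF Dyt]]) (simp_all add: Dyt u_eq L_mult)
  have u_t: "((\<lambda>z. u y z) has_vector_derivative L (riccati_xt s d (P y t))) (at t)"
    by (rule transfer[OF Dt[of y] _ _ tower(6)[OF Dyt]]) (simp_all add: Dyt u_eq)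
  show "pdt u y t = L (riccati_xt s d (P y t))" by (rule pdt_eqI, rule u_t)
  show "pdx (pdx (pdx u)) y t = L (riccati_xxxx s d (P y t))" by (rule pdx_eqI, rule u_xxx)
  show "pdx (\<lambda>y s. u y s ** u y s) y t = L (riccati_sq_x s d (P y t))" by (rule pdx_eqI, rule sq_x)
  show "((\<lambda>z. phi z t) has_vector_derivative u y t) (at y)"
    and "((\<lambda>z. u z t) has_vector_derivative pdx u y t) (at y)"
    and "((\<lambda>z. pdx u z t) has_vector_derivative pdx (pdx u) y t) (at y)"
    and "((\<lambda>z. pdx (pdx u) z t) has_vector_derivative pdx (pdx (pdx u)) y t) (at y)"
    and "((\<lambda>z. u y z) has_vector_derivative pdt u y t) (at t)"
    and "((\<lambda>z. u z t ** u z t) has_vector_derivative pdx (\<lambda>y s. u y s ** u y s) y t) (at y)"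
    using phi_x[OF Dyt] u_x[OF Dyt] u_xx[OF Dyt] u_xxx sq_x u_t u_eq[OF Dyt] u_x_eq[OF Dyt] u_xx_eq[OF Dyt]
    by (simp_all add: pdx_eqI pdt_eqI)
qed

lemma kdv_for_resolvent_image:
  fixes s k :: "'a::{real_normed_algebra_1,banach}" and L :: "'a \<Rightarrow> complex^'m^'m"
    and phi u :: "real \<Rightarrow> real \<Rightarrow> complex^'m^'m"
  assumes units: "open {z::'a. ring_unit z}" and L: "bounded_linear L"
    and L_mult: "\<And>a b. L a ** L b = L (a * (s * k + k * s) * b)"
    and phi: "\<And>y t. ring_unit (1 - k * xi s y t) \<Longrightarrow> phi y t = L (resolvent s k y t)"
    and u: "u = pdx phi" and unit: "ring_unit (1 - k * xi s x t)"
  shows "((\<lambda>y. phi y t) has_vector_derivative u x t) (at x)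
       \<and> ((\<lambda>y. u y t) has_vector_derivative pdx u x t) (at x)
       \<and> ((\<lambda>y. pdx u y t) has_vector_derivative pdx (pdx u) x t) (at x)
       \<and> ((\<lambda>y. pdx (pdx u) y t) has_vector_derivative pdx (pdx (pdx u)) x t) (at x)
       \<and> ((\<lambda>s. u x s) has_vector_derivative pdt u x t) (at t)
       \<and> ((\<lambda>y. u y t ** u y t) has_vector_derivative pdx (\<lambda>y s. u y s ** u y s) x t) (at x)
       \<and> pdt u x t - (1/4) *\<^sub>R pdx (pdx (pdx u)) x t
           - (3/2) *\<^sub>R pdx (\<lambda>y s. u y s ** u y s) x t = 0"
proof -
  note derivs = resolvent_image_derivatives[OF units L L_mult phi u unit]
  let ?p = "resolvent s k x t" and ?d = "s * k + k * s"
  have "pdt u x t - (1/4) *\<^sub>R pdx (pdx (pdx u)) x t - (3/2) *\<^sub>R pdx (\<lambda>y s. u y s ** u y s) x t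
      = L (riccati_xt s ?d ?p - (1/4) *\<^sub>R riccati_xxxx s ?d ?p - (3/2) *\<^sub>R riccati_sq_x s ?d ?p)"
    using derivs(7-9) L by (simp add: linear_simps)
  also have "\<dots> = 0"
    using kdv_identity[OF resolvent_square_relation[OF unit]] L by (simp add: linear_simps)
  finally show ?thesis using derivs(1-6) by simp
qed

section \<open>The matrix KdV equation\<close>

lemma bounded_linear_sandwich:
  "bounded_linear (\<lambda>w::'n::finite sq. (U::complex^'n^'m::finite) ** Rep_sq w ** (V::complex^'m^'n))"
proof -
  have "linear (\<lambda>X::complex^'n^'n. U ** X ** V)"
    by (rule linearI)
       (simp_all add: matrix_add_ldistrib matrix_mult_add_rdistrib scalar_matrix_assoc matrix_scalar_ac)
  then have "bounded_linear (\<lambda>X::complex^'n^'n. U ** X ** V)"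
    by (simp add: linear_conv_bounded_linear)
  from bounded_linear_compose[OF this bounded_linear_Rep_sq] show ?thesis by simp
qed

theorem mainTheorem17:
  fixes S :: "complex^'n^'n" and U :: "complex^'n^'m" and V :: "complex^'m^'n"
    and K :: "complex^'n^'n" and Xi :: "real \<Rightarrow> real \<Rightarrow> complex^'n^'n"
    and phi u :: "real \<Rightarrow> real \<Rightarrow> complex^'m^'m"
    and x t :: real
  assumes sylv: "S ** K + K ** S = V ** U"
    and Xi_def: "Xi = (\<lambda>x t. mexp (- 2 *\<^sub>R (x *\<^sub>R S + t *\<^sub>R (S ** S ** S))))"
    and phi_def: "phi = (\<lambda>x t. U ** Xi x t ** matrix_inv (mat 1 - K ** Xi x t) ** V)"
    and u_def: "u = pdx phi"
    and inv: "invertible (mat 1 - K ** Xi x t)"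
  shows "((\<lambda>y. phi y t) has_vector_derivative u x t) (at x)
       \<and> ((\<lambda>y. u y t) has_vector_derivative pdx u x t) (at x)
       \<and> ((\<lambda>y. pdx u y t) has_vector_derivative pdx (pdx u) x t) (at x)
       \<and> ((\<lambda>y. pdx (pdx u) y t) has_vector_derivative pdx (pdx (pdx u)) x t) (at x)
       \<and> ((\<lambda>s. u x s) has_vector_derivative pdt u x t) (at t)
       \<and> ((\<lambda>y. u y t ** u y t) has_vector_derivative pdx (\<lambda>y s. u y s ** u y s) x t) (at x)
       \<and> pdt u x t - (1/4) *\<^sub>R pdx (pdx (pdx u)) x t
           - (3/2) *\<^sub>R pdx (\<lambda>y s. u y s ** u y s) x t = 0"
proof -
  define s k where "s = Abs_sq S" and "k = Abs_sq K"
  define L where "L = (\<lambda>w::'n sq. U ** Rep_sq w ** V)"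
  have L_mult: "L a ** L b = L (a * (s * k + k * s) * b)" for a b
  proof -
    have "Rep_sq (s * k + k * s) = V ** U"
      using sylv by (simp add: s_def k_def Rep_sq_simps)
    then show ?thesis by (simp add: L_def Rep_sq_simps matrix_mul_assoc)
  qed
  have Xi: "Xi y t = Rep_sq (xi s y t)" for y t
  proof -
    have "Abs_sq (- 2 *\<^sub>R (y *\<^sub>R S + t *\<^sub>R (S ** S ** S))) = - 2 *\<^sub>R (y *\<^sub>R s + t *\<^sub>R (s * s * s))"
      by (simp add: s_def Rep_sq_inject[symmetric] Rep_sq_simps)
    then show ?thesis unfolding Xi_def xi_def mexp_eq_exp by simp
  qed
  have unit_iff: "ring_unit (1 - k * xi s y t) \<longleftrightarrow> invertible (mat 1 - K ** Xi y t)" for y t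
    by (simp add: ring_unit_sq_iff Xi k_def Rep_sq_simps)
  have phi: "phi y t = L (resolvent s k y t)" if "ring_unit (1 - k * xi s y t)" for y t
    using that unfolding phi_def L_def resolvent_def
    by (simp add: Xi Rep_sq_ring_inv Rep_sq_simps matrix_mul_assoc k_def)
  show ?thesis
    using kdv_for_resolvent_image[OF open_ring_units_sq bounded_linear_sandwich[of U V, folded L_def]
        L_mult phi u_def] inv unit_iff by blast
qed

end
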